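(* Let $p\in(1,+\infty)$ and let $V\colon\mathbb{R}^2\to\mathbb{R}$ be a $C^1$ positive coercive function with $|\nabla V(x)|\le CV^{3/2}(x)$ for a.e. $x$ and some $C>0$. Let \[ I(u)=\frac12\int_{\mathbb{R}^2}(|\nabla u|^2+V(x)u^2)\,dx-\frac1{p+1}\|u\|_2^2\int_{\mathbb{R}^2}V(x)|u|^{p+1}dx,\qquad u\in H^1_V(\mathbb{R}^2), \] and \[ \mathcal N=\Big\{u\in H^1_V(\mathbb{R}^2): u\ne0,\ \int_{\mathbb{R}^2}(|\nabla u|^2+V(x)u^2)\,dx=\frac{p+3}{p+1}\|u\|_2^2\int_{\mathbb{R}^2}V(x)|u|^{p+1}dx\Big\}. \] Then $\sigma:=\inf_{u\in\mathcal N}I(u)>0$.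
   Context: $H^1_V(\mathbb{R}^2)$ is the completion of $C_0^\infty(\mathbb{R}^2)$ with respect to the norm $\|u\|_V=\left(\int_{\mathbb{R}^2}(|\nabla u|^2+V|u|^2)\,dx\right)^{1/2}$; $\|\cdot\|_2$ is the $L^2$ norm. *)

theory Defs
  imports "HOL-Analysis.Analysis"
begin

fun Ck :: "nat \<Rightarrow> (real^2 \<Rightarrow> real) \<Rightarrow> bool" where
  "Ck 0 f = continuous_on UNIV f"
| "Ck (Suc k) f = (f differentiable_on UNIV \<and> continuous_on UNIV f \<and>
      (\<forall>v. Ck k (\<lambda>x. frechet_derivative f (at x) v)))"

definition smooth_fun :: "(real^2 \<Rightarrow> real) \<Rightarrow> bool" where
  "smooth_fun f \<longleftrightarrow> (\<forall>k. Ck k f)"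

definition Cc_inf :: "(real^2 \<Rightarrow> real) \<Rightarrow> bool" where
  "Cc_inf f \<longleftrightarrow> smooth_fun f \<and> compact (closure {x. f x \<noteq> 0})"

definition grad :: "(real^2 \<Rightarrow> real) \<Rightarrow> real^2 \<Rightarrow> real^2" where
  "grad f x = (\<chi> i. frechet_derivative f (at x) (axis i 1))"

text \<open>Elements of H^1_V(R^2), the completion of C_0^infinity w.r.t. the V-norm, represented
  as pairs (u, g) of a function and its (weak) gradient which are the limit of a
  sequence of C_0^infinity functions in the norm
  (integral of |grad phi - g|^2 + V |phi - u|^2).\<close>
definition H1V :: "(real^2 \<Rightarrow> real) \<Rightarrow> (real^2 \<Rightarrow> real) \<Rightarrow> (real^2 \<Rightarrow> real^2) \<Rightarrow> bool" where
  "H1V V u g \<longleftrightarrow> u \<in> borel_measurable lborel \<and> g \<in> borel_measurable lborel \<and>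
     (\<exists>\<phi> :: nat \<Rightarrow> real^2 \<Rightarrow> real. (\<forall>n. Cc_inf (\<phi> n)) \<and>
        (\<lambda>n. \<integral>\<^sup>+ x. ennreal ((norm (grad (\<phi> n) x - g x))\<^sup>2 + V x * (\<phi> n x - u x)\<^sup>2) \<partial>lborel)
          \<longlonglongrightarrow> 0)"

definition Vnorm2 :: "(real^2 \<Rightarrow> real) \<Rightarrow> (real^2 \<Rightarrow> real) \<Rightarrow> (real^2 \<Rightarrow> real^2) \<Rightarrow> real" where
  "Vnorm2 V u g = (\<integral>x. (norm (g x))\<^sup>2 + V x * (u x)\<^sup>2 \<partial>lborel)"

definition L2norm2 :: "(real^2 \<Rightarrow> real) \<Rightarrow> real" where
  "L2norm2 u = (\<integral>x. (u x)\<^sup>2 \<partial>lborel)"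

definition Ifun :: "real \<Rightarrow> (real^2 \<Rightarrow> real) \<Rightarrow> (real^2 \<Rightarrow> real) \<Rightarrow> (real^2 \<Rightarrow> real^2) \<Rightarrow> real" where
  "Ifun p V u g = Vnorm2 V u g / 2
     - L2norm2 u * (\<integral>x. V x * \<bar>u x\<bar> powr (p + 1) \<partial>lborel) / (p + 1)"

definition Nehari :: "real \<Rightarrow> (real^2 \<Rightarrow> real) \<Rightarrow> ((real^2 \<Rightarrow> real) \<times> (real^2 \<Rightarrow> real^2)) set" where
  "Nehari p V = {(u, g). H1V V u g \<and> \<not> (AE x in lborel. u x = 0) \<and>
     Vnorm2 V u g = (p + 3) / (p + 1) * L2norm2 u * (\<integral>x. V x * \<bar>u x\<bar> powr (p + 1) \<partial>lborel)}"

end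

theory Submission
  imports Defs
begin

text \<open>
  On the Nehari manifold \<open>I(u) = (p + 1) / (2 (p + 3)) \<cdot> \<parallel>u\<parallel>\<^sub>V\<^sup>2\<close>, so it suffices to bound
  \<open>\<parallel>u\<parallel>\<^sub>V\<^sup>2\<close> away from 0. For a test function \<open>\<phi>\<close> let \<open>\<psi> = \<surd>V \<cdot> \<phi>^(k+1)\<close>. The growth
  condition \<open>|\<nabla>V| \<le> C V^(3/2)\<close> is exactly what gives the pointwise bound
  \<open>|\<nabla>\<psi>| \<le> (k + 1 + C/2) \<cdot> (|\<nabla>\<phi>|\<^sup>2 + V \<phi>\<^sup>2)^(1/2) \<cdot> \<surd>V |\<phi>|^k\<close>; the planar
  Gagliardo--Nirenberg inequality \<open>\<parallel>\<psi>\<parallel>\<^sub>2 \<le> \<parallel>\<nabla>\<psi>\<parallel>\<^sub>1\<close> and Cauchy--Schwarz then give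
  \<open>\<integral> V \<phi>^(2k+2) \<le> c\<^sub>k \<parallel>\<phi>\<parallel>\<^sub>V\<^sup>2 \<integral> V \<phi>^(2k)\<close>. By induction, density and Fatou's lemma,
  \<open>\<integral> V u^(2m) \<le> K \<parallel>u\<parallel>\<^sub>V^(2m)\<close> on \<open>H\<^sup>1\<^sub>V\<close>. Coercivity bounds \<open>V\<close> below by some \<open>v\<^sub>0 > 0\<close>,
  so \<open>\<parallel>u\<parallel>\<^sub>2\<^sup>2 \<le> \<parallel>u\<parallel>\<^sub>V\<^sup>2 / v\<^sub>0\<close>; together with \<open>|u|^(p+1) \<le> u\<^sup>2 + u^(2m)\<close> the Nehari identity
  becomes \<open>N \<le> B N (N + K N^m)\<close> for \<open>N = \<parallel>u\<parallel>\<^sub>V\<^sup>2 > 0\<close>, which forces \<open>N \<ge> min 1 (1 / (B (1 + K)))\<close>.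
\<close>

section \<open>Lebesgue measure on the plane as a product\<close>

definition plane_point :: "real \<times> real \<Rightarrow> real^2" where
  "plane_point z = (\<chi> i. if i = 1 then fst z else snd z)"

lemma plane_point_nth [simp]: "plane_point z $ 1 = fst z" "plane_point z $ 2 = snd z"
  by (auto simp: plane_point_def)

lemma plane_point_eq_add_axis:
  "plane_point (a, b) = plane_point (0, b) + a *\<^sub>R axis 1 1"
  "plane_point (a, b) = plane_point (a, 0) + b *\<^sub>R axis 2 1"
  by (simp_all add: vec_eq_iff forall_2 axis_def)

lemma Basis_real2: "(Basis :: (real^2) set) = {axis 1 1, axis 2 1}"
  by (auto simp: Basis_vec_def UNIV_2)

lemma measurable_plane_point [measurable]: "plane_point \<in> borel_measurable (lborel \<Otimes>\<^sub>M lborel)"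
proof -
  have "continuous_on UNIV (\<lambda>z :: real \<times> real. if i = 1 then fst z else snd z)" for i :: 2
    by (cases "i = 1") (auto intro!: continuous_intros)
  then have "continuous_on UNIV plane_point"
    unfolding plane_point_def by (rule continuous_on_vec_lambda)
  then show ?thesis
    by (simp add: lborel_prod borel_measurable_continuous_onI)
qed

lemma distr_plane_point_lborel: "distr (lborel \<Otimes>\<^sub>M lborel) borel plane_point = lborel"
proof (rule lborel_eqI[symmetric])
  fix l u :: "real^2"
  assume "\<And>b. b \<in> Basis \<Longrightarrow> l \<bullet> b \<le> u \<bullet> b"
  from this[of "axis 1 1"] this[of "axis 2 1"]
  have le: "l$1 \<le> u$1" "l$2 \<le> u$2"
    by (auto simp: Basis_real2 inner_axis)
  have "plane_point -` box l u = box (l$1) (u$1) \<times> box (l$2) (u$2)"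
    by (auto simp: mem_box Basis_real2 inner_axis)
  then have "emeasure (distr (lborel \<Otimes>\<^sub>M lborel) borel plane_point) (box l u)
      = emeasure (lborel \<Otimes>\<^sub>M lborel) (box (l$1) (u$1) \<times> box (l$2) (u$2))"
    by (subst emeasure_distr) (auto simp: space_pair_measure)
  also have "\<dots> = ennreal ((u$1 - l$1) * (u$2 - l$2))"
    using le by (simp add: lborel.emeasure_pair_measure_Times ennreal_mult)
  also have "(u$1 - l$1) * (u$2 - l$2) = (\<Prod>b\<in>Basis. (u - l) \<bullet> b)"
    by (simp add: Basis_real2 axis_eq_axis inner_axis)
  finally show "emeasure (distr (lborel \<Otimes>\<^sub>M lborel) borel plane_point) (box l u)
      = (\<Prod>b\<in>Basis. (u - l) \<bullet> b)" .
qed simp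

lemma nn_integral_plane_point:
  assumes [measurable]: "f \<in> borel_measurable lborel"
  shows "(\<integral>\<^sup>+x. f x \<partial>lborel) = (\<integral>\<^sup>+a. \<integral>\<^sup>+b. f (plane_point (a, b)) \<partial>lborel \<partial>lborel)"
proof -
  have "(\<integral>\<^sup>+x. f x \<partial>lborel) = (\<integral>\<^sup>+z. f (plane_point z) \<partial>(lborel \<Otimes>\<^sub>M lborel))"
    by (subst distr_plane_point_lborel[symmetric], subst nn_integral_distr) auto
  also have "\<dots> = (\<integral>\<^sup>+a. \<integral>\<^sup>+b. f (plane_point (a, b)) \<partial>lborel \<partial>lborel)"
    by (subst lborel.nn_integral_fst[symmetric]) auto
  finally show ?thesis .
qed

section \<open>A Gagliardo--Nirenberg inequality in the plane\<close>

lemma abs_le_nn_integral_deriv_along_line: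
  fixes \<psi> :: "'a::real_inner \<Rightarrow> real" and D :: "'a \<Rightarrow> 'a"
  assumes der: "\<And>x. (\<psi> has_derivative (\<lambda>h. D x \<bullet> h)) (at x)"
    and cont: "continuous_on UNIV D"
    and supp: "\<And>x. R < norm x \<Longrightarrow> \<psi> x = 0"
    and e: "norm e = 1"
  shows "ennreal \<bar>\<psi> (x + s *\<^sub>R e)\<bar> \<le> (\<integral>\<^sup>+t. ennreal \<bar>D (x + t *\<^sub>R e) \<bullet> e\<bar> \<partial>lborel)"
proof -
  define a where "a = - (\<bar>R\<bar> + norm x + 1) - \<bar>s\<bar>"
  have "a \<le> s"
    unfolding a_def using norm_ge_zero[of x] by linarith
  have "\<bar>a\<bar> - norm x \<le> norm (x + a *\<^sub>R e)"
    using norm_triangle_ineq2[of "a *\<^sub>R e" "-x"] e by (simp add: add.commute)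
  then have "\<psi> (x + a *\<^sub>R e) = 0"
    by (intro supp) (auto simp: a_def)
  define d where "d t = D (x + t *\<^sub>R e) \<bullet> e" for t
  have line_deriv: "((\<lambda>t. \<psi> (x + t *\<^sub>R e)) has_vector_derivative d t) (at t within S)" for t S
  proof -
    have "((\<lambda>t. x + t *\<^sub>R e) has_derivative (\<lambda>s. s *\<^sub>R e)) (at t within S)"
      by (auto intro!: derivative_eq_intros)
    from has_derivative_compose[OF this has_derivative_at_withinI[OF der]]
    show ?thesis
      by (simp add: has_vector_derivative_def d_def inner_commute[of "D _"])
  qed
  have cont_d: "continuous_on A d" for A
    unfolding d_def by (intro continuous_intros continuous_on_compose2[OF cont]) auto
  note FTC = integral_FTC_atLeastAtMost[OF \<open>a \<le> s\<close> line_deriv cont_d]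
  have "integrable lborel (\<lambda>t. indicator {a .. s} t *\<^sub>R d t)"
    using borel_integrable_atLeastAtMost'[OF cont_d]
    unfolding set_integrable_def .
  from integral_norm_bound_ennreal[OF this]
  have "ennreal \<bar>\<psi> (x + s *\<^sub>R e)\<bar> \<le> (\<integral>\<^sup>+t. norm (indicator {a .. s} t *\<^sub>R d t) \<partial>lborel)"
    using FTC \<open>\<psi> (x + a *\<^sub>R e) = 0\<close> by simp
  also have "\<dots> \<le> (\<integral>\<^sup>+t. ennreal \<bar>d t\<bar> \<partial>lborel)"
    by (intro nn_integral_mono) (auto simp: indicator_def)
  finally show ?thesis
    unfolding d_def .
qed

lemma nn_integral_square_le_of_line_bounds:
  fixes \<psi> :: "real^2 \<Rightarrow> real" and A B :: "real \<Rightarrow> ennreal"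
  assumes [measurable]: "\<psi> \<in> borel_measurable borel" "A \<in> borel_measurable borel"
    "B \<in> borel_measurable borel"
    and A: "\<And>a b. ennreal \<bar>\<psi> (plane_point (a, b))\<bar> \<le> A b"
    and B: "\<And>a b. ennreal \<bar>\<psi> (plane_point (a, b))\<bar> \<le> B a"
  shows "(\<integral>\<^sup>+x. ennreal ((\<psi> x)\<^sup>2) \<partial>lborel) \<le> (\<integral>\<^sup>+b. A b \<partial>lborel) * (\<integral>\<^sup>+a. B a \<partial>lborel)"
proof -
  have "(\<integral>\<^sup>+x. ennreal ((\<psi> x)\<^sup>2) \<partial>lborel)
      = (\<integral>\<^sup>+a. \<integral>\<^sup>+b. ennreal ((\<psi> (plane_point (a, b)))\<^sup>2) \<partial>lborel \<partial>lborel)"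
    by (rule nn_integral_plane_point) measurable
  also have "\<dots> \<le> (\<integral>\<^sup>+a. \<integral>\<^sup>+b. B a * A b \<partial>lborel \<partial>lborel)"
  proof (intro nn_integral_mono)
    fix a b
    have "ennreal ((\<psi> (plane_point (a, b)))\<^sup>2)
        = ennreal \<bar>\<psi> (plane_point (a, b))\<bar> * ennreal \<bar>\<psi> (plane_point (a, b))\<bar>"
      by (simp add: ennreal_mult[symmetric] power2_eq_square abs_mult[symmetric])
    also have "\<dots> \<le> B a * A b"
      using A B by (intro mult_mono) auto
    finally show "ennreal ((\<psi> (plane_point (a, b)))\<^sup>2) \<le> B a * A b" .
  qed
  also have "\<dots> = (\<integral>\<^sup>+a. B a * (\<integral>\<^sup>+b. A b \<partial>lborel) \<partial>lborel)"
    by (simp add: nn_integral_cmult)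
  also have "\<dots> = (\<integral>\<^sup>+b. A b \<partial>lborel) * (\<integral>\<^sup>+a. B a \<partial>lborel)"
    by (simp add: nn_integral_multc mult.commute)
  finally show ?thesis .
qed

theorem gagliardo_nirenberg_plane:
  fixes \<psi> :: "real^2 \<Rightarrow> real" and D :: "real^2 \<Rightarrow> real^2"
  assumes der: "\<And>x. (\<psi> has_derivative (\<lambda>h. D x \<bullet> h)) (at x)"
    and cont: "continuous_on UNIV D"
    and supp: "\<And>x. R < norm x \<Longrightarrow> \<psi> x = 0"
  shows "(\<integral>\<^sup>+x. ennreal ((\<psi> x)\<^sup>2) \<partial>lborel) \<le> (\<integral>\<^sup>+x. ennreal (norm (D x)) \<partial>lborel)\<^sup>2"
proof -
  have [measurable]: "(\<lambda>x. D x $ i) \<in> borel_measurable borel" for i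
    using cont by (intro borel_measurable_continuous_onI continuous_intros)
  have "continuous_on UNIV \<psi>"
    using der by (meson continuous_at_imp_continuous_on has_derivative_continuous)
  then have [measurable]: "\<psi> \<in> borel_measurable borel"
    by (rule borel_measurable_continuous_onI)
  define D1 where "D1 x = ennreal \<bar>D x $ 1\<bar>" for x
  define D2 where "D2 x = ennreal \<bar>D x $ 2\<bar>" for x
  have [measurable]: "D1 \<in> borel_measurable borel" "D2 \<in> borel_measurable borel"
    unfolding D1_def D2_def by measurable
  define A where "A b = (\<integral>\<^sup>+t. D1 (plane_point (t, b)) \<partial>lborel)" for b
  define B where "B a = (\<integral>\<^sup>+s. D2 (plane_point (a, s)) \<partial>lborel)" for a
  have [measurable]: "A \<in> borel_measurable borel" "B \<in> borel_measurable borel"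
    unfolding A_def B_def by measurable
  have "ennreal \<bar>\<psi> (plane_point (a, b))\<bar> \<le> A b" for a b
    using abs_le_nn_integral_deriv_along_line[OF der cont supp,
        where e = "axis 1 1" and x = "plane_point (0, b)" and s = a]
    by (simp add: A_def D1_def cart_eq_inner_axis plane_point_eq_add_axis(1)[symmetric])
  moreover have "ennreal \<bar>\<psi> (plane_point (a, b))\<bar> \<le> B a" for a b
    using abs_le_nn_integral_deriv_along_line[OF der cont supp,
        where e = "axis 2 1" and x = "plane_point (a, 0)" and s = b]
    by (simp add: B_def D2_def cart_eq_inner_axis plane_point_eq_add_axis(2)[symmetric])
  ultimately have "(\<integral>\<^sup>+x. ennreal ((\<psi> x)\<^sup>2) \<partial>lborel) \<le> (\<integral>\<^sup>+b. A b \<partial>lborel) * (\<integral>\<^sup>+a. B a \<partial>lborel)"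
    by (intro nn_integral_square_le_of_line_bounds) measurable
  also have "(\<integral>\<^sup>+b. A b \<partial>lborel) = (\<integral>\<^sup>+x. D1 x \<partial>lborel)"
    unfolding A_def by (subst lborel_pair.Fubini', measurable, subst nn_integral_plane_point) simp_all
  also have "(\<integral>\<^sup>+a. B a \<partial>lborel) = (\<integral>\<^sup>+x. D2 x \<partial>lborel)"
    unfolding B_def by (subst nn_integral_plane_point) simp_all
  also have "(\<integral>\<^sup>+x. D1 x \<partial>lborel) * (\<integral>\<^sup>+x. D2 x \<partial>lborel)
      \<le> (\<integral>\<^sup>+x. ennreal (norm (D x)) \<partial>lborel) * (\<integral>\<^sup>+x. ennreal (norm (D x)) \<partial>lborel)"
    unfolding D1_def D2_def
    by (intro mult_mono nn_integral_mono) (auto simp: component_le_norm_cart)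
  finally show ?thesis
    by (simp add: power2_eq_square)
qed

lemma linear_eq_inner_axis:
  fixes f :: "real^'n \<Rightarrow> real"
  assumes "linear f"
  shows "f h = (\<chi> i. f (axis i 1)) \<bullet> h"
proof -
  have "f h = f (\<Sum>i\<in>UNIV. h $ i *\<^sub>R axis i 1)"
    unfolding scalar_mult_eq_scaleR[symmetric] basis_expansion ..
  also have "\<dots> = (\<Sum>i\<in>UNIV. h $ i * f (axis i 1))"
    using assms by (simp add: linear_sum linear_scale)
  finally show ?thesis
    by (simp add: inner_vec_def mult.commute)
qed

lemma Cc_inf_Ck1: "Cc_inf \<phi> \<Longrightarrow> Ck (Suc 0) \<phi>"
  by (simp add: Cc_inf_def smooth_fun_def)

lemma Cc_inf_continuous: "Cc_inf \<phi> \<Longrightarrow> continuous_on UNIV \<phi>"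
  using Cc_inf_Ck1 by auto

lemma Cc_inf_continuous_grad: "Cc_inf \<phi> \<Longrightarrow> continuous_on UNIV (grad \<phi>)"
  using Cc_inf_Ck1 unfolding grad_def by (auto intro!: continuous_on_vec_lambda)

lemma borel_measurable_Cc_inf:
  assumes "Cc_inf \<phi>"
  shows "\<phi> \<in> borel_measurable borel" "grad \<phi> \<in> borel_measurable borel"
  using assms
  by (simp_all add: borel_measurable_continuous_onI Cc_inf_continuous Cc_inf_continuous_grad)

lemma Cc_inf_has_derivative:
  assumes "Cc_inf \<phi>"
  shows "(\<phi> has_derivative (\<lambda>h. grad \<phi> x \<bullet> h)) (at x)"
proof -
  have "\<phi> differentiable (at x)"
    using Cc_inf_Ck1[OF assms] by (simp add: differentiable_on_def)
  then have deriv: "(\<phi> has_derivative frechet_derivative \<phi> (at x)) (at x)"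
    by (simp add: frechet_derivative_works)
  moreover have "frechet_derivative \<phi> (at x) = (\<lambda>h. grad \<phi> x \<bullet> h)"
    unfolding grad_def by (rule ext) (rule linear_eq_inner_axis[OF has_derivative_linear[OF deriv]])
  ultimately show ?thesis
    by simp
qed

lemma Cc_inf_bounded_support:
  assumes "Cc_inf \<phi>"
  obtains R where "\<And>x. R < norm x \<Longrightarrow> \<phi> x = 0"
proof -
  have "compact (closure {x. \<phi> x \<noteq> 0})"
    using assms unfolding Cc_inf_def by blast
  then have "bounded (closure {x. \<phi> x \<noteq> 0})"
    by (rule compact_imp_bounded)
  then obtain R where R: "\<And>y. y \<in> closure {x. \<phi> x \<noteq> 0} \<Longrightarrow> norm y \<le> R"
    unfolding bounded_iff by blast
  have "\<phi> x = 0" if "R < norm x" for x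
  proof (rule ccontr)
    assume "\<phi> x \<noteq> 0"
    then have "x \<in> closure {x. \<phi> x \<noteq> 0}"
      by (intro closure_subset[THEN subsetD]) simp
    then have "norm x \<le> R"
      by (rule R)
    with that show False
      by simp
  qed
  then show ?thesis
    by (rule that)
qed

lemma Cc_inf_grad_eq_0:
  assumes "Cc_inf \<phi>" and supp: "\<And>y. R < norm y \<Longrightarrow> \<phi> y = 0" and "R < norm x"
  shows "grad \<phi> x = 0"
proof -
  have "open {y::real^2. R < norm y}"
    by (intro open_Collect_less continuous_intros)
  with has_derivative_const[of 0] have "(\<phi> has_derivative (\<lambda>h. 0)) (at x)"
    by (rule has_derivative_transform_within_open) (use assms in auto)
  from has_derivative_unique[OF Cc_inf_has_derivative[OF assms(1)] this]
  have "grad \<phi> x \<bullet> grad \<phi> x = 0"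
    using fun_cong[where x = "grad \<phi> x"] by blast
  then show ?thesis
    by simp
qed

section \<open>Weighted moments of test functions\<close>

lemma norm_deriv_weighted_power_le:
  fixes G W :: "'a::real_normed_vector"
  assumes v: "0 < v" and C: "0 \<le> C" and W: "norm W \<le> C * v powr (3/2)"
  shows "norm ((sqrt v * (real (Suc k) * f ^ k)) *\<^sub>R G + (f ^ Suc k / (2 * sqrt v)) *\<^sub>R W)
     \<le> (real (Suc k) + C/2) * sqrt ((norm G)\<^sup>2 + v * f\<^sup>2) * (sqrt v * \<bar>f\<bar> ^ k)"
proof -
  define s where "s = sqrt v"
  define h where "h = sqrt ((norm G)\<^sup>2 + v * f\<^sup>2)"
  define g where "g = s * \<bar>f\<bar> ^ k"
  have "0 < s" "0 \<le> g" and v_eq: "v = s\<^sup>2"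
    using v by (simp_all add: s_def g_def)
  have "v powr (3/2) = v powr (1 + 1/2)"
    by simp
  also have "\<dots> = v * s"
    using v by (subst powr_add) (simp add: powr_half_sqrt s_def)
  also have "\<dots> = s ^ 3"
    by (simp only: v_eq power3_eq_cube power2_eq_square)
  finally have v_powr: "v powr (3/2) = s ^ 3" .
  have "norm G \<le> h"
    unfolding h_def by (rule real_le_rsqrt) (use v in simp)
  have "s * \<bar>f\<bar> \<le> h"
    unfolding h_def by (rule real_le_rsqrt) (simp add: v_eq power_mult_distrib)
  have "norm ((sqrt v * (real (Suc k) * f ^ k)) *\<^sub>R G + (f ^ Suc k / (2 * sqrt v)) *\<^sub>R W)
      \<le> norm ((sqrt v * (real (Suc k) * f ^ k)) *\<^sub>R G) + norm ((f ^ Suc k / (2 * sqrt v)) *\<^sub>R W)"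
    by (rule norm_triangle_ineq)
  also have "norm ((sqrt v * (real (Suc k) * f ^ k)) *\<^sub>R G) = real (Suc k) * g * norm G"
    unfolding g_def s_def using v by (simp add: abs_mult power_abs)
  also have "\<dots> \<le> real (Suc k) * g * h"
    using \<open>norm G \<le> h\<close> \<open>0 \<le> g\<close> by (intro mult_left_mono) auto
  also have "norm ((f ^ Suc k / (2 * sqrt v)) *\<^sub>R W) = \<bar>f\<bar> ^ Suc k / (2 * s) * norm W"
    unfolding s_def using v by (simp add: abs_mult power_abs)
  also have "\<dots> \<le> \<bar>f\<bar> ^ Suc k / (2 * s) * (C * s ^ 3)"
    using W v_powr \<open>0 < s\<close> by (intro mult_left_mono) auto
  also have "\<bar>f\<bar> ^ Suc k / (2 * s) * (C * s ^ 3) = C/2 * (s * \<bar>f\<bar>) * g"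
    unfolding g_def using \<open>0 < s\<close> by (simp add: power3_eq_cube field_simps)
  also have "\<dots> \<le> C/2 * h * g"
    using \<open>s * \<bar>f\<bar> \<le> h\<close> \<open>0 \<le> g\<close> C by (intro mult_right_mono mult_left_mono) auto
  finally show ?thesis
    unfolding h_def[symmetric] g_def[symmetric] s_def[symmetric] by (simp add: algebra_simps)
qed

lemma nn_integral_square_le_Cauchy_Schwarz:
  fixes f h g :: "'a \<Rightarrow> real"
  assumes [measurable]: "h \<in> borel_measurable M" "g \<in> borel_measurable M"
    and "0 \<le> c" "\<And>x. 0 \<le> h x" "\<And>x. 0 \<le> g x"
    and "AE x in M. f x \<le> c * h x * g x"
  shows "(\<integral>\<^sup>+x. ennreal (f x) \<partial>M)\<^sup>2
    \<le> ennreal (c\<^sup>2) * (\<integral>\<^sup>+x. ennreal ((h x)\<^sup>2) \<partial>M) * (\<integral>\<^sup>+x. ennreal ((g x)\<^sup>2) \<partial>M)"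
proof -
  have "AE x in M. ennreal (f x) \<le> ennreal c * (ennreal (h x) * ennreal (g x))"
    using assms(6)
  proof eventually_elim
    case (elim x)
    then have "ennreal (f x) \<le> ennreal (c * (h x * g x))"
      by (simp add: ennreal_leI mult.assoc)
    then show ?case
      using assms(3-5) by (simp add: ennreal_mult)
  qed
  then have "(\<integral>\<^sup>+x. ennreal (f x) \<partial>M) \<le> (\<integral>\<^sup>+x. ennreal c * (ennreal (h x) * ennreal (g x)) \<partial>M)"
    by (rule nn_integral_mono_AE)
  also have "\<dots> = ennreal c * (\<integral>\<^sup>+x. ennreal (h x) * ennreal (g x) \<partial>M)"
    by (rule nn_integral_cmult) measurable
  finally have "(\<integral>\<^sup>+x. ennreal (f x) \<partial>M)\<^sup>2 \<le> (ennreal c * (\<integral>\<^sup>+x. ennreal (h x) * ennreal (g x) \<partial>M))\<^sup>2"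
    by (rule power_mono) simp
  also have "\<dots> = ennreal (c\<^sup>2) * (\<integral>\<^sup>+x. ennreal (h x) * ennreal (g x) \<partial>M)\<^sup>2"
    using \<open>0 \<le> c\<close> by (simp add: power_mult_distrib ennreal_power)
  also have "\<dots> \<le> ennreal (c\<^sup>2) * ((\<integral>\<^sup>+x. ennreal (h x) ^ 2 \<partial>M) * (\<integral>\<^sup>+x. ennreal (g x) ^ 2 \<partial>M))"
    by (intro mult_left_mono Cauchy_Schwarz_nn_integral) auto
  finally show ?thesis
    using assms(4,5) by (simp add: ennreal_power mult.assoc)
qed

text \<open>\<open>Vnorm2\<close> as a nonnegative integral, which needs no integrability side conditions.\<close>

definition energy :: "(real^2 \<Rightarrow> real) \<Rightarrow> (real^2 \<Rightarrow> real) \<Rightarrow> (real^2 \<Rightarrow> real^2) \<Rightarrow> ennreal" where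
  "energy V u g = (\<integral>\<^sup>+x. ennreal ((norm (g x))\<^sup>2 + V x * (u x)\<^sup>2) \<partial>lborel)"

definition weighted_moment :: "(real^2 \<Rightarrow> real) \<Rightarrow> (real^2 \<Rightarrow> real) \<Rightarrow> nat \<Rightarrow> ennreal" where
  "weighted_moment V u k = (\<integral>\<^sup>+x. ennreal (V x * (u x) ^ (2 * k)) \<partial>lborel)"

locale potential =
  fixes V :: "real^2 \<Rightarrow> real" and DV :: "real^2 \<Rightarrow> real^2" and C :: real
  assumes V_has_derivative: "\<And>x. (V has_derivative (\<lambda>h. DV x \<bullet> h)) (at x)"
    and continuous_DV: "continuous_on UNIV DV"
    and V_pos: "\<And>x. 0 < V x"
    and C_nonneg: "0 \<le> C"
    and norm_DV_le: "AE x in lborel. norm (DV x) \<le> C * V x powr (3/2)"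
begin

lemma continuous_V: "continuous_on UNIV V"
  using V_has_derivative by (meson continuous_at_imp_continuous_on has_derivative_continuous)

lemma borel_measurable_V [measurable]: "V \<in> borel_measurable borel"
  by (intro borel_measurable_continuous_onI continuous_V)

lemma V_nonneg [simp]: "0 \<le> V x"
  using V_pos[of x] by simp

lemma has_derivative_sqrt_V_mult_power:
  assumes "(\<phi> has_derivative (\<lambda>h. D \<bullet> h)) (at x)"
  shows "((\<lambda>x. sqrt (V x) * \<phi> x ^ k) has_derivative
     (\<lambda>h. ((sqrt (V x) * (real k * \<phi> x ^ (k - 1))) *\<^sub>R D + (\<phi> x ^ k / (2 * sqrt (V x))) *\<^sub>R DV x) \<bullet> h))
     (at x)"
  by (rule has_derivative_eq_rhs[OF has_derivative_mult[OF
        has_derivative_real_sqrt[OF V_pos V_has_derivative] has_derivative_power[OF assms]]])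
    (simp only: fun_eq_iff inner_add_left inner_scaleR_left divide_inverse inverse_mult_distrib mult_ac
      simp_thms)

lemma square_sqrt_V_mult_power: "(sqrt (V x) * a ^ j)\<^sup>2 = V x * a ^ (2 * j)"
  unfolding power_mult_distrib power_mult[symmetric] by (simp add: mult.commute)

lemma Cc_inf_energy_finite:
  assumes "Cc_inf \<phi>"
  shows "energy V \<phi> (grad \<phi>) < \<infinity>"
proof -
  obtain R where R: "\<And>x. R < norm x \<Longrightarrow> \<phi> x = 0"
    using Cc_inf_bounded_support[OF assms] by auto
  define f where "f x = (norm (grad \<phi> x))\<^sup>2 + V x * (\<phi> x)\<^sup>2" for x
  have "continuous_on UNIV f"
    unfolding f_def
    by (intro continuous_intros Cc_inf_continuous[OF assms] Cc_inf_continuous_grad[OF assms] continuous_V)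
  then have "continuous_on (cball 0 \<bar>R\<bar>) f"
    by (rule continuous_on_subset) simp
  from borel_integrable_compact[OF compact_cball this]
  have "integrable lborel (\<lambda>x. indicator (cball 0 \<bar>R\<bar>) x *\<^sub>R f x)" .
  moreover have "indicator (cball 0 \<bar>R\<bar>) x *\<^sub>R f x = f x" for x
    using R[of x] Cc_inf_grad_eq_0[OF assms R, where x = x] by (cases "R < norm x") (auto simp: f_def)
  ultimately have "integrable lborel f"
    by (simp only:)
  have "energy V \<phi> (grad \<phi>) = ennreal (integral\<^sup>L lborel f)"
    unfolding energy_def f_def[symmetric]
    by (rule nn_integral_eq_integral[OF \<open>integrable lborel f\<close>]) (simp add: f_def)
  then show ?thesis
    by simp
qed

lemma weighted_moment_Suc_le:
  assumes "Cc_inf \<phi>"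
  shows "weighted_moment V \<phi> (Suc k)
    \<le> ennreal ((real (Suc k) + C/2)\<^sup>2) * energy V \<phi> (grad \<phi>) * weighted_moment V \<phi> k"
proof -
  obtain R where R: "\<And>x. R < norm x \<Longrightarrow> \<phi> x = 0"
    using Cc_inf_bounded_support[OF assms] by auto
  note [measurable] = borel_measurable_Cc_inf[OF assms]
  define \<psi> where "\<psi> x = sqrt (V x) * \<phi> x ^ Suc k" for x
  define D where "D x = (sqrt (V x) * (real (Suc k) * \<phi> x ^ k)) *\<^sub>R grad \<phi> x
      + (\<phi> x ^ Suc k / (2 * sqrt (V x))) *\<^sub>R DV x" for x
  have \<psi>_deriv: "(\<psi> has_derivative (\<lambda>h. D x \<bullet> h)) (at x)" for x
    using has_derivative_sqrt_V_mult_power[OF Cc_inf_has_derivative[OF assms], where x = x and k = "Suc k"]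
    by (simp add: \<psi>_def[abs_def] D_def)
  have D_cont: "continuous_on UNIV D"
    unfolding D_def using Cc_inf_continuous[OF assms] Cc_inf_continuous_grad[OF assms]
    by (intro continuous_intros continuous_V continuous_DV) (auto simp: V_pos less_imp_neq[symmetric])
  have \<psi>_supp: "R < norm x \<Longrightarrow> \<psi> x = 0" for x
    using R by (simp add: \<psi>_def)
  have "weighted_moment V \<phi> (Suc k) = (\<integral>\<^sup>+x. ennreal ((\<psi> x)\<^sup>2) \<partial>lborel)"
    unfolding weighted_moment_def \<psi>_def square_sqrt_V_mult_power ..
  also have "\<dots> \<le> (\<integral>\<^sup>+x. ennreal (norm (D x)) \<partial>lborel)\<^sup>2"
    by (rule gagliardo_nirenberg_plane[OF \<psi>_deriv D_cont \<psi>_supp])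
  also have "\<dots> \<le> ennreal ((real (Suc k) + C/2)\<^sup>2)
      * (\<integral>\<^sup>+x. ennreal ((sqrt ((norm (grad \<phi> x))\<^sup>2 + V x * (\<phi> x)\<^sup>2))\<^sup>2) \<partial>lborel)
      * (\<integral>\<^sup>+x. ennreal ((sqrt (V x) * \<bar>\<phi> x\<bar> ^ k)\<^sup>2) \<partial>lborel)"
  proof (rule nn_integral_square_le_Cauchy_Schwarz)
    show "AE x in lborel. norm (D x) \<le> (real (Suc k) + C/2)
        * sqrt ((norm (grad \<phi> x))\<^sup>2 + V x * (\<phi> x)\<^sup>2) * (sqrt (V x) * \<bar>\<phi> x\<bar> ^ k)"
      using norm_DV_le unfolding D_def
      by eventually_elim (rule norm_deriv_weighted_power_le[OF V_pos C_nonneg])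
  qed (use C_nonneg in auto)
  also have "\<dots> = ennreal ((real (Suc k) + C/2)\<^sup>2) * energy V \<phi> (grad \<phi>) * weighted_moment V \<phi> k"
    by (simp add: energy_def weighted_moment_def square_sqrt_V_mult_power power_even_abs)
  finally show ?thesis .
qed

lemma weighted_moment_le_energy_power:
  assumes "1 \<le> m"
  shows "\<exists>K\<ge>0. \<forall>\<phi>. Cc_inf \<phi> \<longrightarrow> weighted_moment V \<phi> m \<le> ennreal K * energy V \<phi> (grad \<phi>) ^ m"
  using assms
proof (induction m rule: dec_induct)
  case base
  have "weighted_moment V \<phi> 1 \<le> energy V \<phi> (grad \<phi>)" for \<phi>
    unfolding weighted_moment_def energy_def by (intro nn_integral_mono ennreal_leI) simp
  then show ?case
    by (intro exI[of _ 1]) simp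
next
  case (step m)
  then obtain K where "0 \<le> K"
    and K: "\<And>\<phi>. Cc_inf \<phi> \<Longrightarrow> weighted_moment V \<phi> m \<le> ennreal K * energy V \<phi> (grad \<phi>) ^ m"
    by blast
  define c where "c = (real (Suc m) + C/2)\<^sup>2"
  have "weighted_moment V \<phi> (Suc m) \<le> ennreal (c * K) * energy V \<phi> (grad \<phi>) ^ Suc m"
    if "Cc_inf \<phi>" for \<phi>
  proof -
    have "weighted_moment V \<phi> (Suc m) \<le> ennreal c * energy V \<phi> (grad \<phi>) * weighted_moment V \<phi> m"
      unfolding c_def by (rule weighted_moment_Suc_le[OF that])
    also have "\<dots> \<le> ennreal c * energy V \<phi> (grad \<phi>) * (ennreal K * energy V \<phi> (grad \<phi>) ^ m)"
      by (intro mult_left_mono K[OF that]) simp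
    finally show ?thesis
      using \<open>0 \<le> K\<close> by (simp add: c_def ennreal_mult mult_ac)
  qed
  then show ?case
    using \<open>0 \<le> K\<close> by (intro exI[of _ "c * K"]) (simp add: c_def)
qed

end

section \<open>Weighted moments of finite-energy functions\<close>

lemma power2_norm_le_double:
  fixes a b :: "'a::real_normed_vector"
  shows "(norm a)\<^sup>2 \<le> 2 * (norm (a - b))\<^sup>2 + 2 * (norm b)\<^sup>2"
proof -
  have "(norm a)\<^sup>2 \<le> (norm (a - b) + norm b)\<^sup>2"
    using norm_triangle_sub[of a b] by (intro power_mono) auto
  also have "\<dots> \<le> 2 * (norm (a - b))\<^sup>2 + 2 * (norm b)\<^sup>2"
    using sum_squares_bound[of "norm (a - b)" "norm b"] by (simp add: power2_sum)
  finally show ?thesis .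
qed

lemma nn_integral_tendsto_0_imp_AE_subseq:
  fixes f :: "nat \<Rightarrow> 'a \<Rightarrow> real"
  assumes [measurable]: "\<And>n. f n \<in> borel_measurable M" and "\<And>n x. 0 \<le> f n x"
    and lim: "(\<lambda>n. \<integral>\<^sup>+x. ennreal (f n x) \<partial>M) \<longlonglongrightarrow> 0"
  obtains r where "strict_mono r" "AE x in M. (\<lambda>n. f (r n) x) \<longlonglongrightarrow> 0"
proof -
  obtain n0 where n0: "\<And>n. n0 \<le> n \<Longrightarrow> (\<integral>\<^sup>+x. ennreal (f n x) \<partial>M) < 1"
    using order_tendstoD(2)[OF lim, of 1] by (auto simp: eventually_sequentially)
  have int: "integrable M (f (n + n0))" for n
  proof (rule integrableI_nonneg)
    have "(\<integral>\<^sup>+x. ennreal (f (n + n0) x) \<partial>M) < 1"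
      by (rule n0) simp
    then show "(\<integral>\<^sup>+x. ennreal (f (n + n0) x) \<partial>M) < \<infinity>"
      using less_trans[OF _ ennreal_one_less_top] by simp
  qed (use assms(2) in auto)
  have "(\<lambda>n. enn2real (\<integral>\<^sup>+x. ennreal (f (n + n0) x) \<partial>M)) \<longlonglongrightarrow> enn2real 0"
    using LIMSEQ_ignore_initial_segment[OF lim, of n0] by (intro tendsto_enn2real) auto
  then have "(\<lambda>n. \<integral>x. norm (f (n + n0) x) \<partial>M) \<longlonglongrightarrow> 0"
    using assms(2) by (simp add: integral_eq_nn_integral)
  from tendsto_L1_AE_subseq[OF int this]
  obtain r where r: "strict_mono r" "AE x in M. (\<lambda>n. f (r n + n0) x) \<longlonglongrightarrow> 0"
    by blast
  show ?thesis
  proof (rule that)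
    show "strict_mono (\<lambda>n. r n + n0)"
      using r(1) by (simp add: strict_mono_def)
  qed (rule r(2))
qed

lemma H1V_measurable:
  assumes "H1V V u g"
  shows "u \<in> borel_measurable borel" "g \<in> borel_measurable borel"
  using assms by (simp_all add: H1V_def)

lemma H1V_approximation:
  assumes "H1V V u g"
  obtains \<phi> where "\<And>n. Cc_inf (\<phi> n)"
    "(\<lambda>n. energy V (\<lambda>x. \<phi> n x - u x) (\<lambda>x. grad (\<phi> n) x - g x)) \<longlonglongrightarrow> 0"
  using assms by (auto simp: H1V_def energy_def)

lemma energy_diff_commute:
  "energy V (\<lambda>x. u x - v x) (\<lambda>x. g x - h x) = energy V (\<lambda>x. v x - u x) (\<lambda>x. h x - g x)"
  by (simp add: energy_def norm_minus_commute power2_commute)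

context potential
begin

lemma energy_le_double:
  assumes [measurable]: "u \<in> borel_measurable borel" "v \<in> borel_measurable borel"
    "g \<in> borel_measurable borel" "h \<in> borel_measurable borel"
  shows "energy V u g \<le> 2 * energy V (\<lambda>x. u x - v x) (\<lambda>x. g x - h x) + 2 * energy V v h"
proof -
  have "(norm (g x))\<^sup>2 + V x * (u x)\<^sup>2
      \<le> 2 * ((norm (g x - h x))\<^sup>2 + V x * (u x - v x)\<^sup>2) + 2 * ((norm (h x))\<^sup>2 + V x * (v x)\<^sup>2)" for x
  proof -
    have "V x * (u x)\<^sup>2 \<le> V x * (2 * (u x - v x)\<^sup>2 + 2 * (v x)\<^sup>2)"
      using power2_norm_le_double[of "u x" "v x"] by (intro mult_left_mono) auto
    then show ?thesis
      using power2_norm_le_double[of "g x" "h x"] by (simp add: algebra_simps)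
  qed
  note pointwise = this
  have "ennreal ((norm (g x))\<^sup>2 + V x * (u x)\<^sup>2)
      \<le> 2 * ennreal ((norm (g x - h x))\<^sup>2 + V x * (u x - v x)\<^sup>2) + 2 * ennreal ((norm (h x))\<^sup>2 + V x * (v x)\<^sup>2)"
    for x
    using ennreal_leI[OF pointwise[of x]] by (simp add: ennreal_plus ennreal_mult)
  then have "energy V u g \<le> (\<integral>\<^sup>+x. 2 * ennreal ((norm (g x - h x))\<^sup>2 + V x * (u x - v x)\<^sup>2)
      + 2 * ennreal ((norm (h x))\<^sup>2 + V x * (v x)\<^sup>2) \<partial>lborel)"
    unfolding energy_def by (rule nn_integral_mono)
  also have "\<dots> = 2 * energy V (\<lambda>x. u x - v x) (\<lambda>x. g x - h x) + 2 * energy V v h"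
    by (simp add: energy_def nn_integral_add nn_integral_cmult)
  finally show ?thesis .
qed

lemma energy_eq_0_imp_AE_zero:
  assumes [measurable]: "u \<in> borel_measurable borel" "g \<in> borel_measurable borel"
    and "energy V u g = 0"
  shows "AE x in lborel. u x = 0"
proof -
  have "AE x in lborel. ennreal ((norm (g x))\<^sup>2 + V x * (u x)\<^sup>2) = 0"
    using assms(3) unfolding energy_def by (subst (asm) nn_integral_0_iff_AE) auto
  then show ?thesis
  proof eventually_elim
    case (elim x)
    then show ?case
      using V_pos[of x] by (simp add: add_nonneg_eq_0_iff)
  qed
qed

lemma H1V_energy_finite:
  assumes "H1V V u g"
  shows "energy V u g < \<infinity>"
proof -
  note [measurable] = H1V_measurable[OF assms]
  obtain \<phi> where Cc: "\<And>n. Cc_inf (\<phi> n)"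
    and lim: "(\<lambda>n. energy V (\<lambda>x. \<phi> n x - u x) (\<lambda>x. grad (\<phi> n) x - g x)) \<longlonglongrightarrow> 0"
    using H1V_approximation[OF assms] by blast
  obtain n where n: "energy V (\<lambda>x. \<phi> n x - u x) (\<lambda>x. grad (\<phi> n) x - g x) < 1"
    using eventually_happens[OF order_tendstoD(2)[OF lim, of 1]] by auto
  note [measurable] = borel_measurable_Cc_inf[OF Cc[of n]]
  have "energy V u g \<le> 2 * energy V (\<lambda>x. \<phi> n x - u x) (\<lambda>x. grad (\<phi> n) x - g x)
      + 2 * energy V (\<phi> n) (grad (\<phi> n))"
    using energy_le_double[of u "\<phi> n" g "grad (\<phi> n)"] energy_diff_commute[of V u "\<phi> n" g "grad (\<phi> n)"]
    by simp
  also have "\<dots> < \<infinity>"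
    using less_trans[OF n ennreal_one_less_top] Cc_inf_energy_finite[OF Cc[of n]]
    by (simp add: ennreal_mult_less_top)
  finally show ?thesis .
qed

lemma Vnorm2_nonneg: "0 \<le> Vnorm2 V u g"
  unfolding Vnorm2_def by (rule integral_nonneg_AE) simp

lemma H1V_Vnorm2_eq_energy:
  assumes "H1V V u g"
  shows "ennreal (Vnorm2 V u g) = energy V u g"
proof -
  note [measurable] = H1V_measurable[OF assms]
  have "Vnorm2 V u g = enn2real (energy V u g)"
    unfolding Vnorm2_def energy_def by (rule integral_eq_nn_integral) auto
  then show ?thesis
    using H1V_energy_finite[OF assms] by (simp add: less_top)
qed

lemma H1V_Vnorm2_pos:
  assumes "H1V V u g" and "\<not> (AE x in lborel. u x = 0)"
  shows "0 < Vnorm2 V u g"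
proof -
  have "energy V u g \<noteq> 0"
    using energy_eq_0_imp_AE_zero[OF H1V_measurable[OF assms(1)]] assms(2) by blast
  then have "Vnorm2 V u g \<noteq> 0"
    using H1V_Vnorm2_eq_energy[OF assms(1)] by auto
  with Vnorm2_nonneg show ?thesis
    by (simp add: less_le)
qed

lemma H1V_integrable_energy_density:
  assumes "H1V V u g"
  shows "integrable lborel (\<lambda>x. (norm (g x))\<^sup>2 + V x * (u x)\<^sup>2)"
  using H1V_measurable[OF assms] H1V_energy_finite[OF assms]
  by (intro integrableI_nonneg) (auto simp: energy_def)

lemma AE_subseq_tendsto_of_energy_tendsto_0:
  assumes [measurable]: "\<And>n. f n \<in> borel_measurable borel" "u \<in> borel_measurable borel"
    and lim: "(\<lambda>n. energy V (\<lambda>x. f n x - u x) (G n)) \<longlonglongrightarrow> 0"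
  obtains r where "strict_mono r" "AE x in lborel. (\<lambda>n. f (r n) x) \<longlonglongrightarrow> u x"
proof -
  define w where "w n x = V x * (f n x - u x)\<^sup>2" for n x
  have "(\<integral>\<^sup>+x. ennreal (w n x) \<partial>lborel) \<le> energy V (\<lambda>x. f n x - u x) (G n)" for n
    unfolding w_def energy_def by (intro nn_integral_mono ennreal_leI) simp
  then have "(\<lambda>n. \<integral>\<^sup>+x. ennreal (w n x) \<partial>lborel) \<longlonglongrightarrow> 0"
    by (intro tendsto_sandwich[OF _ _ tendsto_const lim]) auto
  moreover have "w n \<in> borel_measurable lborel" for n
    unfolding w_def by measurable
  moreover have "0 \<le> w n x" for n x
    by (simp add: w_def)
  ultimately obtain r where "strict_mono r" and AE_w: "AE x in lborel. (\<lambda>n. w (r n) x) \<longlonglongrightarrow> 0"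
    using nn_integral_tendsto_0_imp_AE_subseq[of w lborel] by metis
  from AE_w have "AE x in lborel. (\<lambda>n. f (r n) x) \<longlonglongrightarrow> u x"
  proof eventually_elim
    case (elim x)
    then have "(\<lambda>n. sqrt (w (r n) x / V x)) \<longlonglongrightarrow> sqrt (0 / V x)"
      using V_pos[of x] by (intro tendsto_real_sqrt tendsto_divide tendsto_const) auto
    then have "(\<lambda>n. \<bar>f (r n) x - u x\<bar>) \<longlonglongrightarrow> 0"
      using V_pos[of x] by (simp add: w_def)
    then show ?case
      by (simp add: LIM_zero_iff tendsto_rabs_zero_iff)
  qed
  with \<open>strict_mono r\<close> show ?thesis
    using that by blast
qed

lemma eventually_energy_le_triple:
  assumes [measurable]: "u \<in> borel_measurable borel" "g \<in> borel_measurable borel"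
    "\<And>n. f n \<in> borel_measurable borel" "\<And>n. G n \<in> borel_measurable borel"
    and lim: "(\<lambda>n. energy V (\<lambda>x. f n x - u x) (\<lambda>x. G n x - g x)) \<longlonglongrightarrow> 0"
    and "energy V u g \<noteq> 0"
  shows "eventually (\<lambda>n. energy V (f n) (G n) \<le> 3 * energy V u g) sequentially"
proof -
  have "(\<lambda>n. 2 * energy V (\<lambda>x. f n x - u x) (\<lambda>x. G n x - g x)) \<longlonglongrightarrow> 2 * 0"
    by (rule ennreal_tendsto_cmult[OF _ lim]) simp
  then have "eventually (\<lambda>n. 2 * energy V (\<lambda>x. f n x - u x) (\<lambda>x. G n x - g x) < energy V u g)
      sequentially"
    using assms(6) by (intro order_tendstoD(2)) (auto simp: zero_less_iff_neq_zero)
  then show ?thesis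
  proof eventually_elim
    case (elim n)
    have "energy V (f n) (G n) \<le> 2 * energy V (\<lambda>x. f n x - u x) (\<lambda>x. G n x - g x) + 2 * energy V u g"
      by (rule energy_le_double) measurable
    also have "\<dots> \<le> energy V u g + 2 * energy V u g"
      using elim by (intro add_right_mono) simp
    also have "\<dots> = 3 * energy V u g"
      using distrib_right[of "1::ennreal" 2 "energy V u g"] by simp
    finally show ?case .
  qed
qed

lemma weighted_moment_le_of_AE_tendsto:
  assumes [measurable]: "\<And>n. f n \<in> borel_measurable borel"
    and "AE x in lborel. (\<lambda>n. f n x) \<longlonglongrightarrow> u x"
    and "eventually (\<lambda>n. weighted_moment V (f n) m \<le> B) sequentially"
  shows "weighted_moment V u m \<le> B"
proof -
  have "AE x in lborel. ennreal (V x * u x ^ (2 * m)) = liminf (\<lambda>n. ennreal (V x * f n x ^ (2 * m)))"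
    using assms(2)
  proof eventually_elim
    case (elim x)
    then have "(\<lambda>n. ennreal (V x * f n x ^ (2 * m))) \<longlonglongrightarrow> ennreal (V x * u x ^ (2 * m))"
      by (intro tendsto_ennrealI tendsto_mult tendsto_const tendsto_power)
    then show ?case
      using lim_imp_Liminf[OF trivial_limit_sequentially] by metis
  qed
  then have "weighted_moment V u m = (\<integral>\<^sup>+x. liminf (\<lambda>n. ennreal (V x * f n x ^ (2 * m))) \<partial>lborel)"
    unfolding weighted_moment_def by (rule nn_integral_cong_AE)
  also have "\<dots> \<le> liminf (\<lambda>n. weighted_moment V (f n) m)"
    unfolding weighted_moment_def by (rule nn_integral_liminf) measurable
  also have "\<dots> \<le> limsup (\<lambda>n. weighted_moment V (f n) m)"
    by (rule Liminf_le_Limsup) simp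
  also have "\<dots> \<le> B"
    using assms(3) by (rule Limsup_bounded)
  finally show ?thesis .
qed

lemma H1V_weighted_moment_le:
  assumes H: "H1V V u g" and "1 \<le> m" and "0 \<le> K"
    and K: "\<And>\<phi>. Cc_inf \<phi> \<Longrightarrow> weighted_moment V \<phi> m \<le> ennreal K * energy V \<phi> (grad \<phi>) ^ m"
  shows "weighted_moment V u m \<le> ennreal (3 ^ m * K) * energy V u g ^ m"
proof (cases "energy V u g = 0")
  case True
  have "AE x in lborel. u x = 0"
    by (rule energy_eq_0_imp_AE_zero[OF H1V_measurable[OF H] True])
  then have "AE x in lborel. ennreal (V x * u x ^ (2 * m)) = 0"
    by eventually_elim (use \<open>1 \<le> m\<close> in simp)
  then have "weighted_moment V u m = 0"
    using nn_integral_cong_AE unfolding weighted_moment_def by fastforce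
  then show ?thesis
    by simp
next
  case False
  note [measurable] = H1V_measurable[OF H]
  obtain \<phi> where Cc: "\<And>n. Cc_inf (\<phi> n)"
    and lim: "(\<lambda>n. energy V (\<lambda>x. \<phi> n x - u x) (\<lambda>x. grad (\<phi> n) x - g x)) \<longlonglongrightarrow> 0"
    using H1V_approximation[OF H] by blast
  note [measurable] = borel_measurable_Cc_inf[OF Cc]
  obtain r where "strict_mono r" and AE_lim: "AE x in lborel. (\<lambda>n. \<phi> (r n) x) \<longlonglongrightarrow> u x"
    using AE_subseq_tendsto_of_energy_tendsto_0[OF _ _ lim] by auto
  have "eventually (\<lambda>n. energy V (\<phi> n) (grad (\<phi> n)) \<le> 3 * energy V u g) sequentially"
    by (rule eventually_energy_le_triple[OF _ _ _ _ lim False]) measurable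
  from eventually_subseq[OF \<open>strict_mono r\<close> this]
  have "eventually (\<lambda>n. weighted_moment V (\<phi> (r n)) m \<le> ennreal K * (3 * energy V u g) ^ m)
      sequentially"
    by eventually_elim (rule order_trans[OF K[OF Cc]], intro mult_left_mono power_mono, simp_all)
  from weighted_moment_le_of_AE_tendsto[OF _ AE_lim this]
  have "weighted_moment V u m \<le> ennreal K * (3 * energy V u g) ^ m"
    by measurable
  also have "\<dots> = ennreal (3 ^ m * K) * energy V u g ^ m"
    using \<open>0 \<le> K\<close> ennreal_power[of 3 m] by (simp add: power_mult_distrib ennreal_mult mult_ac)
  finally show ?thesis .
qed

end

section \<open>The Nehari manifold\<close>

lemma abs_powr_le_square_add_power:
  fixes t q :: real
  assumes "2 \<le> q" "q \<le> real (2 * m)"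
  shows "\<bar>t\<bar> powr q \<le> t\<^sup>2 + t ^ (2 * m)"
proof (cases "\<bar>t\<bar> \<le> 1")
  case True
  then have "\<bar>t\<bar> powr q \<le> \<bar>t\<bar> powr 2"
    using assms(1) by (intro powr_mono') auto
  also have "\<bar>t\<bar> powr 2 = t\<^sup>2"
    by (cases "t = 0") (simp_all add: powr_numeral)
  moreover have "0 \<le> t ^ (2 * m)"
    by (simp add: power_mult)
  ultimately show ?thesis
    by linarith
next
  case False
  then have "\<bar>t\<bar> powr q \<le> \<bar>t\<bar> powr real (2 * m)"
    using assms(2) by (intro powr_mono) auto
  also have "\<bar>t\<bar> powr real (2 * m) = t ^ (2 * m)"
    using False by (subst powr_realpow) (auto simp: power_even_abs)
  finally show ?thesis
    using zero_le_power2[of t] by linarith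
qed

lemma coercive_pos_bounded_below:
  fixes f :: "'a::euclidean_space \<Rightarrow> real"
  assumes "continuous_on UNIV f" "\<And>x. 0 < f x" "filterlim f at_top at_infinity"
  obtains c where "0 < c" "\<And>x. c \<le> f x"
proof -
  obtain b where b: "\<And>x. b \<le> norm x \<Longrightarrow> 1 \<le> f x"
    using assms(3) unfolding filterlim_at_top eventually_at_infinity by blast
  have "\<exists>x0\<in>cball 0 \<bar>b\<bar>. \<forall>y\<in>cball 0 \<bar>b\<bar>. f x0 \<le> f y"
    by (intro continuous_attains_inf continuous_on_subset[OF assms(1)]) auto
  then obtain x0 where x0: "\<And>y. y \<in> cball 0 \<bar>b\<bar> \<Longrightarrow> f x0 \<le> f y"
    by blast
  have "min 1 (f x0) \<le> f x" for x
    using b[of x] x0[of x] by (cases "norm x \<le> \<bar>b\<bar>") (auto simp: min_le_iff_disj)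
  then show ?thesis
    using assms(2)[of x0] by (intro that[of "min 1 (f x0)"]) auto
qed

lemma min_le_of_le_superlinear:
  fixes N B K :: real
  assumes "0 < N" "N \<le> B * N * (N + K * N ^ m)" "1 \<le> m" "0 \<le> B" "0 \<le> K"
  shows "min 1 (1 / (B * (1 + K))) \<le> N"
proof (cases "N \<le> 1")
  case True
  then have "N ^ m \<le> N"
    using assms(1,3) power_decreasing[of 1 m N] by simp
  then have "N + K * N ^ m \<le> (1 + K) * N"
    using assms(5) by (simp add: distrib_right mult_left_mono)
  then have "B * N * (N + K * N ^ m) \<le> B * N * ((1 + K) * N)"
    using assms(1,4) by (intro mult_left_mono) auto
  with assms(2) have "N \<le> B * N * ((1 + K) * N)"
    by linarith
  moreover have "B * N * ((1 + K) * N) = N * (B * (1 + K) * N)"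
    by (simp add: algebra_simps)
  ultimately have "N * 1 \<le> N * (B * (1 + K) * N)"
    by (simp only: mult_1_right)
  then have "1 \<le> B * (1 + K) * N"
    using mult_le_cancel_left_pos[OF assms(1)] by blast
  moreover have "0 \<le> B * (1 + K)"
    using assms(4,5) by simp
  moreover have "B * (1 + K) \<noteq> 0"
    using \<open>1 \<le> B * (1 + K) * N\<close> by auto
  ultimately have "0 < B * (1 + K)"
    by (metis less_le)
  with \<open>1 \<le> B * (1 + K) * N\<close> have "1 / (B * (1 + K)) \<le> N"
    by (simp add: pos_divide_le_eq mult.commute)
  then show ?thesis
    by simp
qed simp

lemma Ifun_Nehari:
  assumes "(u, g) \<in> Nehari p V" and "0 < p + 1"
  shows "Ifun p V u g = (p + 1) / (2 * (p + 3)) * Vnorm2 V u g"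
  using assms by (simp add: Nehari_def Ifun_def field_simps)

context potential
begin

lemma H1V_L2norm2_le:
  assumes H: "H1V V u g" and "0 < v0" and v0: "\<And>x. v0 \<le> V x"
  shows "L2norm2 u \<le> Vnorm2 V u g / v0"
proof -
  have "L2norm2 u \<le> (\<integral>x. ((norm (g x))\<^sup>2 + V x * (u x)\<^sup>2) / v0 \<partial>lborel)"
    unfolding L2norm2_def
  proof (rule integral_mono')
    fix x
    have "v0 * (u x)\<^sup>2 \<le> V x * (u x)\<^sup>2"
      using v0[of x] by (intro mult_right_mono) auto
    then have "v0 * (u x)\<^sup>2 \<le> (norm (g x))\<^sup>2 + V x * (u x)\<^sup>2"
      by (rule add_increasing[OF zero_le_power2])
    then show "(u x)\<^sup>2 \<le> ((norm (g x))\<^sup>2 + V x * (u x)\<^sup>2) / v0"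
      using \<open>0 < v0\<close> by (simp add: field_simps)
  qed (use H1V_integrable_energy_density[OF H] \<open>0 < v0\<close> in auto)
  then show ?thesis
    by (simp add: Vnorm2_def)
qed

lemma H1V_powr_integral_le:
  assumes H: "H1V V u g" and "2 \<le> q" "q \<le> real (2 * m)" and "0 \<le> K"
    and moment: "weighted_moment V u m \<le> ennreal K * energy V u g ^ m"
  shows "(\<integral>x. V x * \<bar>u x\<bar> powr q \<partial>lborel) \<le> Vnorm2 V u g + K * Vnorm2 V u g ^ m"
proof -
  note [measurable] = H1V_measurable[OF H]
  have "(\<integral>\<^sup>+x. ennreal (V x * \<bar>u x\<bar> powr q) \<partial>lborel)
      \<le> (\<integral>\<^sup>+x. ennreal (V x * (u x)\<^sup>2) + ennreal (V x * u x ^ (2 * m)) \<partial>lborel)"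
    using abs_powr_le_square_add_power[OF assms(2,3)]
    by (intro nn_integral_mono)
      (simp add: ennreal_leI mult_left_mono zero_le_even_power flip: ennreal_plus distrib_left)
  also have "\<dots> = (\<integral>\<^sup>+x. ennreal (V x * (u x)\<^sup>2) \<partial>lborel) + weighted_moment V u m"
    by (simp add: nn_integral_add weighted_moment_def)
  also have "\<dots> \<le> energy V u g + ennreal K * energy V u g ^ m"
    unfolding energy_def by (intro add_mono moment[unfolded energy_def] nn_integral_mono ennreal_leI) simp
  also have "\<dots> = ennreal (Vnorm2 V u g + K * Vnorm2 V u g ^ m)"
    using \<open>0 \<le> K\<close> Vnorm2_nonneg
    by (simp add: H1V_Vnorm2_eq_energy[OF H, symmetric] ennreal_plus ennreal_mult ennreal_power)
  finally have "(\<integral>\<^sup>+x. ennreal (V x * \<bar>u x\<bar> powr q) \<partial>lborel)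
      \<le> ennreal (Vnorm2 V u g + K * Vnorm2 V u g ^ m)" .
  moreover have "0 \<le> Vnorm2 V u g + K * Vnorm2 V u g ^ m"
    using \<open>0 \<le> K\<close> Vnorm2_nonneg by simp
  ultimately show ?thesis
    by (subst integral_eq_nn_integral) (auto intro: enn2real_leI)
qed

lemma Nehari_Vnorm2_le_superlinear:
  assumes "(u, g) \<in> Nehari p V" and "1 < p" and "0 < v0" and v0: "\<And>x. v0 \<le> V x"
    and "p + 1 \<le> real (2 * m)" and "0 \<le> K"
    and "weighted_moment V u m \<le> ennreal K * energy V u g ^ m"
  shows "Vnorm2 V u g
    \<le> (p + 3) / (p + 1) / v0 * Vnorm2 V u g * (Vnorm2 V u g + K * Vnorm2 V u g ^ m)"
proof -
  define N where "N = Vnorm2 V u g"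
  have H: "H1V V u g"
    and Nehari_eq: "N = (p + 3) / (p + 1) * L2norm2 u * (\<integral>x. V x * \<bar>u x\<bar> powr (p + 1) \<partial>lborel)"
    using assms(1) by (simp_all add: Nehari_def N_def)
  have W_le: "(\<integral>x. V x * \<bar>u x\<bar> powr (p + 1) \<partial>lborel) \<le> N + K * N ^ m"
    unfolding N_def by (rule H1V_powr_integral_le[OF H _ assms(5,6,7)]) (use \<open>1 < p\<close> in simp)
  note Nehari_eq
  also have "(p + 3) / (p + 1) * L2norm2 u * (\<integral>x. V x * \<bar>u x\<bar> powr (p + 1) \<partial>lborel)
      \<le> (p + 3) / (p + 1) * (N / v0) * (N + K * N ^ m)"
  proof (intro mult_mono mult_left_mono)
    show "L2norm2 u \<le> N / v0"
      unfolding N_def by (rule H1V_L2norm2_le[OF H \<open>0 < v0\<close> v0])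
    show "0 \<le> (\<integral>x. V x * \<bar>u x\<bar> powr (p + 1) \<partial>lborel)"
      by (rule integral_nonneg_AE) simp
    show "0 \<le> (p + 3) / (p + 1) * (N / v0)"
      using \<open>1 < p\<close> \<open>0 < v0\<close> Vnorm2_nonneg by (simp add: N_def)
    show "0 \<le> L2norm2 u"
      unfolding L2norm2_def by (rule integral_nonneg_AE) simp
  qed (use \<open>1 < p\<close> W_le in simp_all)
  also have "\<dots> = (p + 3) / (p + 1) / v0 * N * (N + K * N ^ m)"
    by simp
  finally show ?thesis
    unfolding N_def .
qed

lemma Nehari_Vnorm2_lower_bound:
  assumes "filterlim V at_top at_infinity" and "1 < p"
  obtains \<delta> where "0 < \<delta>" "\<And>u g. (u, g) \<in> Nehari p V \<Longrightarrow> \<delta> \<le> Vnorm2 V u g"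
proof -
  obtain v0 where "0 < v0" and v0: "\<And>x. v0 \<le> V x"
    using coercive_pos_bounded_below[OF continuous_V V_pos assms(1)] by blast
  define m where "m = nat \<lceil>(p + 1) / 2\<rceil>"
  have "(p + 1) / 2 \<le> real m"
    unfolding m_def by linarith
  then have m: "1 \<le> m" "p + 1 \<le> real (2 * m)"
    using \<open>1 < p\<close> by (auto simp: Suc_le_eq)
  obtain K where "0 \<le> K"
    and K: "\<And>\<phi>. Cc_inf \<phi> \<Longrightarrow> weighted_moment V \<phi> m \<le> ennreal K * energy V \<phi> (grad \<phi>) ^ m"
    using weighted_moment_le_energy_power[OF m(1)] by blast
  define B where "B = (p + 3) / (p + 1) / v0"
  show thesis
  proof (rule that)
    show "0 < min 1 (1 / (B * (1 + 3 ^ m * K)))"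
      using \<open>0 < v0\<close> \<open>1 < p\<close> \<open>0 \<le> K\<close> by (simp add: B_def add_pos_nonneg)
  next
    fix u g
    assume Nehari: "(u, g) \<in> Nehari p V"
    then have H: "H1V V u g" and nonzero: "\<not> (AE x in lborel. u x = 0)"
      by (simp_all add: Nehari_def)
    have "Vnorm2 V u g \<le> B * Vnorm2 V u g * (Vnorm2 V u g + 3 ^ m * K * Vnorm2 V u g ^ m)"
      unfolding B_def
      by (rule Nehari_Vnorm2_le_superlinear[OF Nehari \<open>1 < p\<close> \<open>0 < v0\<close> v0 m(2) _
            H1V_weighted_moment_le[OF H m(1) \<open>0 \<le> K\<close> K]]) (use \<open>0 \<le> K\<close> in simp)
    then show "min 1 (1 / (B * (1 + 3 ^ m * K))) \<le> Vnorm2 V u g"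
      by (rule min_le_of_le_superlinear[OF H1V_Vnorm2_pos[OF H nonzero] _ m(1)])
        (use \<open>0 < v0\<close> \<open>1 < p\<close> \<open>0 \<le> K\<close> in \<open>simp_all add: B_def\<close>)
  qed
qed

end

theorem lemma3p4:
  fixes p C :: real and V :: "real^2 \<Rightarrow> real" and DV :: "real^2 \<Rightarrow> real^2"
  assumes "p > 1"
    and "\<And>x. (V has_derivative (\<lambda>h. DV x \<bullet> h)) (at x)"
    and "continuous_on UNIV DV"
    and "\<And>x. V x > 0"
    and "filterlim V at_top at_infinity"
    and "C > 0"
    and "AE x in lborel. norm (DV x) \<le> C * V x powr (3/2)"
  shows "\<exists>\<sigma>>0. \<forall>(u, g) \<in> Nehari p V. Ifun p V u g \<ge> \<sigma>"
proof -
  interpret potential V DV C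
    using assms(2-4,6,7) by unfold_locales auto
  obtain \<delta> where "0 < \<delta>" and \<delta>: "\<And>u g. (u, g) \<in> Nehari p V \<Longrightarrow> \<delta> \<le> Vnorm2 V u g"
    using Nehari_Vnorm2_lower_bound[OF assms(5,1)] by blast
  have "(p + 1) / (2 * (p + 3)) * \<delta> \<le> Ifun p V u g" if "(u, g) \<in> Nehari p V" for u g
    using mult_left_mono[OF \<delta>[OF that], of "(p + 1) / (2 * (p + 3))"] \<open>1 < p\<close>
    by (simp add: Ifun_Nehari[OF that])
  moreover have "0 < (p + 1) / (2 * (p + 3)) * \<delta>"
    using \<open>0 < \<delta>\<close> \<open>1 < p\<close> by simp
  ultimately show ?thesis
    by blast
qed

end
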